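(* Let $\mathscr{T}$ be a connected spanning set of pure states in a finite-dimensional Hilbert space $\mathcal{H}$. Then any maximal connected linearly independent set contained in $\mathscr{T}$ is a connected basis of $\mathcal{H}$.
   Context: The transition graph of a set $\mathscr{T}=\{|\psi_j\rangle\}$ of pure states has vertices the states, with two distinct vertices adjacent iff their inner product is nonzero; $\mathscr{T}$ is connected if this graph is connected. A connected spanning set is a connected set spanning $\mathcal{H}$; a connected linearly independent set (CLIS) is a connected, linearly independent set; a connected basis is a CLIS spanning $\mathcal{H}$. A CLIS contained in $\mathscr{T}$ is maximal if it is not properly contained in any other CLIS contained in $\mathscr{T}$. *)

theory Defs
  imports "HOL-Analysis.Analysis"
begin

text \<open>The finite-dimensional Hilbert space is modelled as complex^'n with 'n a finite type,
  with the standard inner product (conjugate-linear in the first argument).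
  Linear (in)dependence and span are over the complex scalars, via the library
  interpretation vec of vector_space for (*s).\<close>

definition cinner :: "complex ^ 'n \<Rightarrow> complex ^ 'n \<Rightarrow> complex" where
  "cinner x y = (\<Sum>i\<in>UNIV. cnj (x $ i) * y $ i)"

definition pure_state :: "complex ^ 'n \<Rightarrow> bool" where
  "pure_state x \<longleftrightarrow> cinner x x = 1"

definition transition_edges :: "(complex ^ 'n) set \<Rightarrow> ((complex ^ 'n) \<times> (complex ^ 'n)) set" where
  "transition_edges S = {(x, y). x \<in> S \<and> y \<in> S \<and> x \<noteq> y \<and> cinner x y \<noteq> 0}"

definition connected_set :: "(complex ^ 'n) set \<Rightarrow> bool" where
  "connected_set S \<longleftrightarrow> (\<forall>x\<in>S. \<forall>y\<in>S. (x, y) \<in> (transition_edges S)\<^sup>*)"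

definition connected_spanning_set :: "(complex ^ 'n) set \<Rightarrow> bool" where
  "connected_spanning_set S \<longleftrightarrow> connected_set S \<and> vec.span S = UNIV"

definition CLIS :: "(complex ^ 'n) set \<Rightarrow> bool" where
  "CLIS S \<longleftrightarrow> connected_set S \<and> \<not> vec.dependent S"

definition connected_basis :: "(complex ^ 'n) set \<Rightarrow> bool" where
  "connected_basis S \<longleftrightarrow> CLIS S \<and> vec.span S = UNIV"

definition maximal_CLIS_in :: "(complex ^ 'n) set \<Rightarrow> (complex ^ 'n) set \<Rightarrow> bool" where
  "maximal_CLIS_in T S \<longleftrightarrow> S \<subseteq> T \<and> CLIS S \<and> \<not> (\<exists>S'. S' \<subseteq> T \<and> CLIS S' \<and> S \<subset> S')"

end

theory Submission
  imports Defs
begin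

text \<open>If a state \<open>t \<in> T\<close> outside the span of a maximal CLIS \<open>S \<subseteq> T\<close> had nonzero inner
  product with some element of \<open>S\<close>, then \<open>insert t S\<close> would be a larger CLIS. Hence every
  state of \<open>T\<close> outside \<open>span S\<close> is orthogonal to \<open>span S\<close>, so no edge of the transition
  graph of \<open>T\<close> leaves \<open>span S\<close>. Since \<open>T\<close> is connected and meets \<open>span S\<close>, it lies in
  \<open>span S\<close>, and as \<open>T\<close> spans the space, so does \<open>S\<close>.\<close>

lemma cinner_commute_cnj: "cinner y x = cnj (cinner x y)"
  unfolding cinner_def by (simp add: mult.commute)

lemma cinner_zero_left [simp]: "cinner 0 x = 0"
  unfolding cinner_def by simp

lemma subspace_orthogonal: "vec.subspace {v. cinner v t = 0}"
  unfolding vec.subspace_def cinner_def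
  by (auto simp: distrib_right sum.distrib sum_distrib_left[symmetric] mult.assoc)

lemma pure_state_nonzero: "pure_state x \<Longrightarrow> x \<noteq> 0"
  unfolding pure_state_def by auto

lemma transition_edges_mono: "A \<subseteq> B \<Longrightarrow> transition_edges A \<subseteq> transition_edges B"
  unfolding transition_edges_def by auto

lemma connected_set_insert:
  assumes "connected_set S" and "s \<in> S" and "cinner s t \<noteq> 0"
  shows "connected_set (insert t S)"
proof (cases "t \<in> S")
  case True
  then show ?thesis using assms(1) by (simp add: insert_absorb)
next
  case False
  let ?E = "transition_edges (insert t S)"
  have in_S: "(x, y) \<in> ?E\<^sup>*" if "x \<in> S" "y \<in> S" for x y
    using assms(1) that rtrancl_mono[OF transition_edges_mono[of S "insert t S"]]
    unfolding connected_set_def by blast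
  have "(s, t) \<in> ?E" and "(t, s) \<in> ?E"
    using assms(2,3) False unfolding transition_edges_def
    by (auto simp: cinner_commute_cnj[of s t])
  then have "(t, z) \<in> ?E\<^sup>*" and "(z, t) \<in> ?E\<^sup>*" if "z \<in> S" for z
    using in_S[OF assms(2) that] in_S[OF that assms(2)]
    by (meson converse_rtrancl_into_rtrancl rtrancl_into_rtrancl)+
  then show ?thesis
    unfolding connected_set_def using in_S by auto
qed

lemma CLIS_insert:
  assumes "CLIS S" and "t \<notin> vec.span S" and "s \<in> S" and "cinner s t \<noteq> 0"
  shows "CLIS (insert t S)"
  using assms connected_set_insert[of S s t] unfolding CLIS_def
  by (simp add: vec.independent_insert)

lemma maximal_CLIS_nonempty:
  assumes "maximal_CLIS_in T S" and "t \<in> T" and "t \<noteq> 0"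
  shows "S \<noteq> {}"
proof
  assume "S = {}"
  have "CLIS {t}"
    using assms(3) unfolding CLIS_def connected_set_def by (auto simp: vec.dependent_single)
  then show False
    using assms(1,2) \<open>S = {}\<close> unfolding maximal_CLIS_in_def by blast
qed

lemma maximal_CLIS_orthogonal_span:
  assumes "maximal_CLIS_in T S" and "t \<in> T" and "t \<notin> vec.span S" and "v \<in> vec.span S"
  shows "cinner v t = 0"
proof -
  have "cinner s t = 0" if "s \<in> S" for s
  proof (rule ccontr)
    assume "cinner s t \<noteq> 0"
    then have "CLIS (insert t S)"
      using assms(1,3) that CLIS_insert unfolding maximal_CLIS_in_def by blast
    moreover have "S \<subset> insert t S"
      using assms(3) vec.span_superset by auto
    ultimately show False
      using assms(1,2) unfolding maximal_CLIS_in_def by blast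
  qed
  then have "vec.span S \<subseteq> {v. cinner v t = 0}"
    by (intro vec.span_minimal) (auto simp: subspace_orthogonal)
  then show ?thesis using assms(4) by auto
qed

lemma connected_set_subset_closed:
  assumes "connected_set T" and "x \<in> T" and "x \<in> A"
    and closed: "\<And>y z. (y, z) \<in> transition_edges T \<Longrightarrow> y \<in> A \<Longrightarrow> z \<in> A"
  shows "T \<subseteq> A"
proof
  fix z assume "z \<in> T"
  then have "(x, z) \<in> (transition_edges T)\<^sup>*"
    using assms(1,2) unfolding connected_set_def by blast
  then show "z \<in> A"
    by (induction rule: rtrancl_induct) (use \<open>x \<in> A\<close> closed in blast)+
qed

lemma span_UNIV_nonempty:
  fixes S :: "('a::field ^ 'n) set"
  assumes "vec.span S = UNIV"
  shows "S \<noteq> {}"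
proof
  assume "S = {}"
  then have "(1::'a ^ 'n) = 0"
    using assms by (metis UNIV_I singletonD vec.span_empty)
  then show False by (simp add: vec_eq_iff)
qed

theorem lemma4:
  fixes T S :: "(complex ^ 'n) set"
  assumes "\<forall>x\<in>T. pure_state x"
    and "connected_spanning_set T"
    and "maximal_CLIS_in T S"
  shows "connected_basis S"
proof -
  have conn_T: "connected_set T" and span_T: "vec.span T = UNIV"
    using assms(2) unfolding connected_spanning_set_def by auto
  obtain t where "t \<in> T"
    using span_UNIV_nonempty[OF span_T] by auto
  then obtain s where s: "s \<in> S"
    using maximal_CLIS_nonempty[OF assms(3)] assms(1) pure_state_nonzero by blast
  have S_T: "S \<subseteq> T" and CLIS_S: "CLIS S"
    using assms(3) unfolding maximal_CLIS_in_def by auto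
  have "T \<subseteq> vec.span S"
  proof (rule connected_set_subset_closed[OF conn_T])
    show "s \<in> T" and "s \<in> vec.span S"
      using s S_T vec.span_superset by auto
    show "z \<in> vec.span S" if "(y, z) \<in> transition_edges T" and "y \<in> vec.span S" for y z
      using that maximal_CLIS_orthogonal_span[OF assms(3)] unfolding transition_edges_def by auto
  qed
  then have "vec.span S = UNIV"
    using span_T vec.span_minimal[OF _ vec.subspace_span] by blast
  then show ?thesis
    using CLIS_S unfolding connected_basis_def by auto
qed

end
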